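(* Assume the event $\mathcal{E}$ holds. Then for every true risk minimizer $f^*$, the abstain rate of the selective classifier output by ILESS satisfies $$1-\Phi(\mathrm{ILESS})\le \theta_{f^*}(R_0)\cdot R_0,$$ where $$R_0\triangleq 2R(f^* )+11\frac{A}{m}+6\sqrt{\frac{A}{m}R(f^* )}.$$ Consequently, $1-\Phi(\mathrm{ILESS})\le \theta(R_0)\cdot R_0$.
   Context: Let $\mathcal{F}$ be a hypothesis class of binary classifiers $\mathcal{X}\to\{\pm1\}$ with finite VC dimension $d$. Let $\mathcal{P}_{X,Y}$ be an unknown distribution on $\mathcal{X}\times\{\pm1\}$, and let $S_m$ be an i.i.d. sample of size $m$ from it. With the 0/1 loss, $R(f)=\Pr(f(X)\neq Y)$ is the true risk and $\hat R(f)=\hat R(f,S_m)$ is the empirical risk on $S_m$. $\hat f$ is an empirical risk minimizer over $\mathcal{F}$, and $f^*$ is a true risk minimizer over $\mathcal{F}$ (assumed to exist). Fix $0<\delta<1$ and set $A\triangleq 4d\ln\!\big(\tfrac{16me}{d\delta}\big)$. The event $\mathcal{E}$ is the event that, simultaneously for every $f\in\mathcal{F}$, $$R(f)\le \hat R(f)+\min\Big\{\tfrac{A}{m}+\sqrt{\tfrac{A}{m}\hat R(f)},\ \sqrt{\tfrac{A}{m}R(f)}\Big\}$$ and $$\hat R(f)\le R(f)+\min\Big\{\tfrac{A}{m}+\sqrt{\tfrac{A}{m}R(f)},\ \sqrt{\tfrac{A}{m}\hat R(f)}\Big\}.$$ This event holds with probability at least $1-\delta$. **ILESS.** Let $$\sigma_{\mathrm{ILESS}}=\tfrac{A}{m}+\sqrt{\tfrac{A}{m}\hat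 R(\hat f)}+\tfrac{A}{m}+\sqrt{\tfrac{A}{m}\big[\hat R(\hat f)+\tfrac{A}{m}+\sqrt{\tfrac{A}{m}\hat R(\hat f)}\big]}$$ and $G=\{f\in\mathcal{F}:\hat R(f)\le \hat R(\hat f)+\sigma_{\mathrm{ILESS}}\}$. ILESS outputs $(\hat f,g)$, where $g(x)=1$ if and only if $x\notin DIS(G)$. Here $DIS(G)=\{x:\exists f_1,f_2\in G,\ f_1(x)\neq f_2(x)\}$. The coverage is $\Phi=\Pr_{X}(g(X)=1)$, so the abstain rate is $1-\Phi=\Pr(DIS(G))$. **Disagreement coefficient.** Let $B(f,r)=\{f'\in\mathcal{F}:\Pr_X(f'(X)\neq f(X))\le r\}$ and $\Delta B(f,r)=\Pr(DIS(B(f,r)))$. Then $\theta_f(r_0)=\sup_{r>r_0}\Delta B(f,r)/r$ and $\theta(r_0)=\sup_{f\in\mathcal{F}}\theta_f(r_0)$. *)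

theory Defs
  imports "HOL-Probability.Probability"
begin

(* Classifiers X -> {+1,-1} are modelled as functions 'a => bool (True = +1). *)

definition shatters :: "('a \<Rightarrow> bool) set \<Rightarrow> 'a set \<Rightarrow> bool" where
  "shatters F C \<longleftrightarrow> (\<forall>T\<subseteq>C. \<exists>f\<in>F. \<forall>x\<in>C. f x \<longleftrightarrow> x \<in> T)"

definition vc_dim_eq :: "('a \<Rightarrow> bool) set \<Rightarrow> nat \<Rightarrow> bool" where
  "vc_dim_eq F d \<longleftrightarrow>
     (\<exists>C. finite C \<and> card C = d \<and> shatters F C) \<and>
     (\<forall>C. finite C \<and> shatters F C \<longrightarrow> card C \<le> d)"

definition risk :: "('a \<times> bool) measure \<Rightarrow> ('a \<Rightarrow> bool) \<Rightarrow> real" where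
  "risk P f = measure P {z \<in> space P. f (fst z) \<noteq> snd z}"

definition emp_risk :: "('a \<times> bool) list \<Rightarrow> ('a \<Rightarrow> bool) \<Rightarrow> real" where
  "emp_risk S f = real (length (filter (\<lambda>z. f (fst z) \<noteq> snd z) S)) / real (length S)"

definition A_const :: "nat \<Rightarrow> nat \<Rightarrow> real \<Rightarrow> real" where
  "A_const d m \<delta> = 4 * real d * ln (16 * real m * exp 1 / (real d * \<delta>))"

definition event_E :: "('a \<times> bool) measure \<Rightarrow> ('a \<Rightarrow> bool) set \<Rightarrow> ('a \<times> bool) list \<Rightarrow> real \<Rightarrow> bool" where
  "event_E P F S A \<longleftrightarrow> (\<forall>f\<in>F.
     risk P f \<le> emp_risk S f + min (A / real (length S) + sqrt (A / real (length S) * emp_risk S f))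
                                    (sqrt (A / real (length S) * risk P f)) \<and>
     emp_risk S f \<le> risk P f + min (A / real (length S) + sqrt (A / real (length S) * risk P f))
                                    (sqrt (A / real (length S) * emp_risk S f)))"

definition sigma_iless :: "real \<Rightarrow> real \<Rightarrow> nat \<Rightarrow> real" where
  "sigma_iless Rh A m = A / real m + sqrt (A / real m * Rh) + A / real m
      + sqrt (A / real m * (Rh + A / real m + sqrt (A / real m * Rh)))"

definition iless_G :: "('a \<Rightarrow> bool) set \<Rightarrow> ('a \<times> bool) list \<Rightarrow> real \<Rightarrow> ('a \<Rightarrow> bool) \<Rightarrow> ('a \<Rightarrow> bool) set" where
  "iless_G F S A fh = {f \<in> F. emp_risk S f \<le> emp_risk S fh + sigma_iless (emp_risk S fh) A (length S)}"

definition DIS :: "'a measure \<Rightarrow> ('a \<Rightarrow> bool) set \<Rightarrow> 'a set" where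
  "DIS MX G = {x \<in> space MX. \<exists>f1\<in>G. \<exists>f2\<in>G. f1 x \<noteq> f2 x}"

(* outer probability; coincides with the probability on measurable sets *)
definition outer_prob :: "'a measure \<Rightarrow> 'a set \<Rightarrow> real" where
  "outer_prob M A = Inf {measure M B | B. B \<in> sets M \<and> A \<subseteq> B}"

(* ILESS selector g(x) = 1 iff x \<notin> DIS(G); abstain rate 1 - \<Phi> = Pr(DIS(G)) *)
definition abstain_rate_iless ::
  "'a measure \<Rightarrow> ('a \<Rightarrow> bool) set \<Rightarrow> ('a \<times> bool) list \<Rightarrow> real \<Rightarrow> ('a \<Rightarrow> bool) \<Rightarrow> real" where
  "abstain_rate_iless PX F S A fh = outer_prob PX (DIS PX (iless_G F S A fh))"

definition dis_ball :: "'a measure \<Rightarrow> ('a \<Rightarrow> bool) set \<Rightarrow> ('a \<Rightarrow> bool) \<Rightarrow> real \<Rightarrow> ('a \<Rightarrow> bool) set" where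
  "dis_ball PX F f r = {f' \<in> F. measure PX {x \<in> space PX. f' x \<noteq> f x} \<le> r}"

definition DeltaB :: "'a measure \<Rightarrow> ('a \<Rightarrow> bool) set \<Rightarrow> ('a \<Rightarrow> bool) \<Rightarrow> real \<Rightarrow> real" where
  "DeltaB PX F f r = outer_prob PX (DIS PX (dis_ball PX F f r))"

definition theta_f :: "'a measure \<Rightarrow> ('a \<Rightarrow> bool) set \<Rightarrow> ('a \<Rightarrow> bool) \<Rightarrow> real \<Rightarrow> ereal" where
  "theta_f PX F f r0 = (SUP r\<in>{r0<..}. ereal (DeltaB PX F f r / r))"

definition theta :: "'a measure \<Rightarrow> ('a \<Rightarrow> bool) set \<Rightarrow> real \<Rightarrow> ereal" where
  "theta PX F r0 = (SUP f\<in>F. theta_f PX F f r0)"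

end

theory Submission
  imports Defs
begin

text \<open>
  On the event E, every f in G has risk at most R(f*) + 10 A/m + 4 sqrt(A/m R(f*)): chain the
  uniform deviation bound for f, the defining inequality of G, the ERM property of f-hat and the
  deviation bound for f*. Since Pr(f(X) \<noteq> f*(X)) \<le> R(f) + R(f*), this puts G inside the
  disagreement ball B(f*, R0), so the abstain rate is at most \<Delta>B(f*, R0), and \<Delta>B(f*, R0) \<le>
  \<theta>_f*(R0) R0 follows from the monotonicity of \<Delta>B by letting r tend to R0 from above.
\<close>

lemma sqrt_mult_le_sqrt_add:
  fixes a r x c :: real
  assumes "0 \<le> a" "0 \<le> r" "0 \<le> c" "x \<le> r + c\<^sup>2 * a + 2 * c * sqrt (a * r)"
  shows "sqrt (a * x) \<le> sqrt (a * r) + c * a"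
proof (rule real_le_lsqrt)
  let ?u = "sqrt (a * r)"
  have u_sq: "?u\<^sup>2 = a * r"
    using assms by simp
  have "a * x \<le> a * (r + c\<^sup>2 * a + 2 * c * ?u)"
    using assms by (intro mult_left_mono) auto
  also have "\<dots> = (?u + c * a)\<^sup>2"
    using u_sq by (simp add: power2_eq_square algebra_simps)
  finally show "a * x \<le> (?u + c * a)\<^sup>2" .
  show "0 \<le> ?u + c * a"
    using assms by simp
qed

lemma risk_chain_bound:
  fixes a r_star e_hat e_f r_f :: real
  assumes "0 \<le> a" "0 \<le> r_star" "0 \<le> e_hat" "0 \<le> e_f"
    and e_hat: "e_hat \<le> r_star + a + sqrt (a * r_star)"
    and e_f: "e_f \<le> e_hat + (a + sqrt (a * e_hat) + a + sqrt (a * (e_hat + a + sqrt (a * e_hat))))"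
    and r_f: "r_f \<le> e_f + a + sqrt (a * e_f)"
  shows "r_f \<le> r_star + 10 * a + 4 * sqrt (a * r_star)"
proof -
  let ?u = "sqrt (a * r_star)"
  have "0 \<le> ?u"
    using assms by simp
  have "e_hat \<le> r_star + 1\<^sup>2 * a + 2 * 1 * ?u"
    unfolding power_one mult_1 mult_1_right using e_hat \<open>0 \<le> ?u\<close> by linarith
  then have sqrt_e_hat: "sqrt (a * e_hat) \<le> ?u + a"
    using sqrt_mult_le_sqrt_add[of a r_star 1 e_hat] assms by simp
  have "e_hat + a + sqrt (a * e_hat) \<le> r_star + 2\<^sup>2 * a + 2 * 2 * ?u"
    unfolding power2_eq_square using e_hat sqrt_e_hat \<open>0 \<le> ?u\<close> \<open>0 \<le> a\<close> by linarith
  then have sqrt_inner: "sqrt (a * (e_hat + a + sqrt (a * e_hat))) \<le> ?u + 2 * a"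
    using assms by (intro sqrt_mult_le_sqrt_add) simp_all
  have e_f_bound: "e_f \<le> r_star + 6 * a + 3 * ?u"
    using e_hat e_f sqrt_e_hat sqrt_inner by linarith
  have "e_f \<le> r_star + 3\<^sup>2 * a + 2 * 3 * ?u"
    unfolding power2_eq_square using e_f_bound \<open>0 \<le> ?u\<close> \<open>0 \<le> a\<close> by linarith
  then have sqrt_e_f: "sqrt (a * e_f) \<le> ?u + 3 * a"
    using assms by (intro sqrt_mult_le_sqrt_add) simp_all
  show ?thesis
    using r_f e_f_bound sqrt_e_f by linarith
qed

lemma risk_nonneg: "0 \<le> risk P f"
  by (simp add: risk_def)

lemma emp_risk_nonneg: "0 \<le> emp_risk S f"
  by (simp add: emp_risk_def)

text \<open>
  A_const can be negative (and is a junk value when d = 0); the event E itself rules this out.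
\<close>

lemma event_E_ratio_nonneg:
  assumes "event_E P F S A" "f \<in> F"
  shows "0 \<le> A / real (length S)"
proof (rule ccontr)
  let ?a = "A / real (length S)"
  assume "\<not> 0 \<le> ?a"
  then have "?a < 0" by simp
  then have "?a * risk P f \<le> 0" "?a * emp_risk S f \<le> 0"
    by (meson less_imp_le mult_nonpos_nonneg risk_nonneg emp_risk_nonneg)+
  then have "sqrt (?a * risk P f) \<le> 0" "sqrt (?a * emp_risk S f) \<le> 0"
    by (simp_all only: real_sqrt_le_0_iff)
  moreover have "risk P f \<le> emp_risk S f + sqrt (?a * risk P f)"
    "emp_risk S f \<le> risk P f + sqrt (?a * emp_risk S f)"
    "risk P f \<le> emp_risk S f + (?a + sqrt (?a * emp_risk S f))"
    using assms unfolding event_E_def by auto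
  ultimately show False
    using \<open>?a < 0\<close> by linarith
qed

lemma iless_G_risk_le:
  assumes E: "event_E P F S A"
    and erm: "\<forall>f\<in>F. emp_risk S fhat \<le> emp_risk S f"
    and "g \<in> F" and "f \<in> iless_G F S A fhat"
  shows "risk P f \<le> risk P g + 10 * (A / real (length S)) + 4 * sqrt (A / real (length S) * risk P g)"
proof (rule risk_chain_bound)
  let ?a = "A / real (length S)"
  have "f \<in> F" and f_in_G: "emp_risk S f \<le> emp_risk S fhat + sigma_iless (emp_risk S fhat) A (length S)"
    using assms unfolding iless_G_def by auto
  show "0 \<le> ?a"
    using E \<open>g \<in> F\<close> by (rule event_E_ratio_nonneg)
  have "emp_risk S g \<le> risk P g + ?a + sqrt (?a * risk P g)"
    using E \<open>g \<in> F\<close> unfolding event_E_def by (auto simp: add.assoc)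
  then show "emp_risk S fhat \<le> risk P g + ?a + sqrt (?a * risk P g)"
    using erm \<open>g \<in> F\<close> by (meson order_trans)
  show "emp_risk S f \<le> emp_risk S fhat + (?a + sqrt (?a * emp_risk S fhat) + ?a
          + sqrt (?a * (emp_risk S fhat + ?a + sqrt (?a * emp_risk S fhat))))"
    using f_in_G by (simp add: sigma_iless_def)
  show "risk P f \<le> emp_risk S f + ?a + sqrt (?a * emp_risk S f)"
    using E \<open>f \<in> F\<close> unfolding event_E_def by auto
qed (simp_all add: risk_nonneg emp_risk_nonneg)

lemma disagreement_le_risk_add:
  fixes P :: "('a \<times> bool) measure"
  assumes "prob_space P" and sets_P: "sets P = sets (MX \<Otimes>\<^sub>M count_space UNIV)"
    and f_measurable[measurable]: "f \<in> MX \<rightarrow>\<^sub>M count_space UNIV"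
    and g_measurable[measurable]: "g \<in> MX \<rightarrow>\<^sub>M count_space UNIV"
  shows "measure (distr P MX fst) {x \<in> space (distr P MX fst). f x \<noteq> g x} \<le> risk P f + risk P g"
proof -
  have fst_measurable: "fst \<in> P \<rightarrow>\<^sub>M MX"
    using measurable_cong_sets[OF sets_P refl] measurable_fst by blast
  have error_set: "{z \<in> space P. h (fst z) \<noteq> snd z} \<in> sets P"
    if [measurable]: "h \<in> MX \<rightarrow>\<^sub>M count_space UNIV" for h
  proof -
    have "{z \<in> space (MX \<Otimes>\<^sub>M count_space UNIV). h (fst z) \<noteq> snd z} \<in> sets (MX \<Otimes>\<^sub>M count_space UNIV)"
      by measurable
    then show ?thesis
      using sets_P sets_eq_imp_space_eq[OF sets_P] by simp
  qed
  have "{x \<in> space MX. f x \<noteq> g x} \<in> sets MX"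
    by measurable
  interpret prob_space P by fact
  from \<open>{x \<in> space MX. f x \<noteq> g x} \<in> sets MX\<close>
  have "measure (distr P MX fst) {x \<in> space (distr P MX fst). f x \<noteq> g x}
      = measure P (fst -` {x \<in> space MX. f x \<noteq> g x} \<inter> space P)"
    using measure_distr[OF fst_measurable] by simp
  also have "\<dots> \<le> measure P ({z \<in> space P. f (fst z) \<noteq> snd z} \<union> {z \<in> space P. g (fst z) \<noteq> snd z})"
    using error_set[OF f_measurable] error_set[OF g_measurable] by (intro finite_measure_mono sets.Un) auto
  also have "\<dots> \<le> risk P f + risk P g"
    unfolding risk_def using error_set[OF f_measurable] error_set[OF g_measurable] by (rule measure_Un_le)
  finally show ?thesis .
qed

lemma iless_G_subset_dis_ball:
  fixes P :: "('a \<times> bool) measure"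
  assumes "prob_space P" "sets P = sets (MX \<Otimes>\<^sub>M count_space UNIV)"
    and F_measurable: "\<forall>f\<in>F. f \<in> MX \<rightarrow>\<^sub>M count_space UNIV"
    and E: "event_E P F S A" and erm: "\<forall>f\<in>F. emp_risk S fhat \<le> emp_risk S f" and "g \<in> F"
    and r: "2 * risk P g + 10 * (A / real (length S)) + 4 * sqrt (A / real (length S) * risk P g) \<le> r"
  shows "iless_G F S A fhat \<subseteq> dis_ball (distr P MX fst) F g r"
proof
  fix f assume f_in_G: "f \<in> iless_G F S A fhat"
  then have "f \<in> F"
    by (simp add: iless_G_def)
  have "measure (distr P MX fst) {x \<in> space (distr P MX fst). f x \<noteq> g x} \<le> risk P f + risk P g"
    using assms(1,2) F_measurable \<open>f \<in> F\<close> \<open>g \<in> F\<close> by (intro disagreement_le_risk_add) auto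
  also have "\<dots> \<le> r"
    using iless_G_risk_le[OF E erm \<open>g \<in> F\<close> f_in_G] r by linarith
  finally show "f \<in> dis_ball (distr P MX fst) F g r"
    using \<open>f \<in> F\<close> by (simp add: dis_ball_def)
qed

lemma outer_prob_mono:
  assumes "A \<subseteq> B" "B \<subseteq> space M"
  shows "outer_prob M A \<le> outer_prob M B"
  unfolding outer_prob_def
proof (rule cInf_superset_mono)
  show "{measure M B' |B'. B' \<in> sets M \<and> B \<subseteq> B'} \<noteq> {}"
    using assms by blast
  show "bdd_below {measure M B |B. B \<in> sets M \<and> A \<subseteq> B}"
    by (rule bdd_belowI[of _ 0]) auto
  show "{measure M B' |B'. B' \<in> sets M \<and> B \<subseteq> B'} \<subseteq> {measure M B |B. B \<in> sets M \<and> A \<subseteq> B}"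
    using assms by blast
qed

lemma DIS_subset_space: "DIS M G \<subseteq> space M"
  unfolding DIS_def by auto

lemma DIS_mono:
  assumes "G \<subseteq> H"
  shows "DIS M G \<subseteq> DIS M H"
proof
  fix x assume "x \<in> DIS M G"
  then obtain f1 f2 where "x \<in> space M" "f1 \<in> G" "f2 \<in> G" "f1 x \<noteq> f2 x"
    unfolding DIS_def by auto
  then show "x \<in> DIS M H"
    using assms unfolding DIS_def by auto
qed

lemma outer_prob_DIS_mono: "G \<subseteq> H \<Longrightarrow> outer_prob M (DIS M G) \<le> outer_prob M (DIS M H)"
  by (rule outer_prob_mono[OF DIS_mono DIS_subset_space])

lemma DeltaB_mono: "r \<le> r' \<Longrightarrow> DeltaB M F f r \<le> DeltaB M F f r'"
  unfolding DeltaB_def dis_ball_def by (rule outer_prob_DIS_mono) auto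

lemma le_mult_of_forall_gt:
  fixes D t r0 :: real
  assumes "\<And>r. r > r0 \<Longrightarrow> D \<le> t * r"
  shows "D \<le> t * r0"
proof (rule tendsto_le[OF trivial_limit_at_right_real])
  show "((\<lambda>r. t * r) \<longlongrightarrow> t * r0) (at_right r0)"
    by (intro tendsto_mult_left tendsto_ident_at)
  show "((\<lambda>r. D) \<longlongrightarrow> D) (at_right r0)"
    by simp
  show "\<forall>\<^sub>F r in at_right r0. D \<le> t * r"
    using eventually_at_right_less by (rule eventually_mono) (rule assms)
qed

lemma DeltaB_le_theta_f:
  assumes "theta_f M F f r0 < \<infinity>" "0 \<le> r0"
  shows "ereal (DeltaB M F f r0) \<le> theta_f M F f r0 * ereal r0"
proof -
  have ratio_le: "ereal (DeltaB M F f r / r) \<le> theta_f M F f r0" if "r > r0" for r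
    unfolding theta_f_def using that by (intro SUP_upper) auto
  from ratio_le[of "r0 + 1"] assms(1) obtain t where t: "theta_f M F f r0 = ereal t"
    by (cases "theta_f M F f r0") auto
  have "DeltaB M F f r0 \<le> t * r0"
  proof (rule le_mult_of_forall_gt)
    fix r assume "r > r0"
    then have "DeltaB M F f r \<le> t * r"
      using ratio_le[of r] t assms(2) by (simp add: divide_le_eq mult.commute)
    then show "DeltaB M F f r0 \<le> t * r"
      using DeltaB_mono[of r0 r M F f] \<open>r > r0\<close> by linarith
  qed
  then show ?thesis
    using t by simp
qed

lemma theta_f_le_theta: "f \<in> F \<Longrightarrow> theta_f M F f r0 \<le> theta M F r0"
  unfolding theta_def by (rule SUP_upper)

theorem theorem5:
  fixes MX :: "'a measure" and P :: "('a \<times> bool) measure"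
    and F :: "('a \<Rightarrow> bool) set" and d m :: nat and \<delta> :: real
    and S :: "('a \<times> bool) list" and fhat fstar :: "'a \<Rightarrow> bool"
  assumes "prob_space P"
    and "sets P = sets (MX \<Otimes>\<^sub>M count_space UNIV)"
    and "\<forall>f\<in>F. f \<in> MX \<rightarrow>\<^sub>M count_space UNIV"
    and "vc_dim_eq F d"
    and "0 < \<delta>" and "\<delta> < 1"
    and "length S = m" and "0 < m" and "set S \<subseteq> space P"
    and "fhat \<in> F" and "\<forall>f\<in>F. emp_risk S fhat \<le> emp_risk S f"
    and "fstar \<in> F" and "\<forall>f\<in>F. risk P fstar \<le> risk P f"
    and "event_E P F S (A_const d m \<delta>)"
  defines "PX \<equiv> distr P MX fst"
    and "R0 \<equiv> 2 * risk P fstar + 11 * (A_const d m \<delta> / real m)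
               + 6 * sqrt (A_const d m \<delta> / real m * risk P fstar)"
  shows "(theta_f PX F fstar R0 < \<infinity> \<longrightarrow>
            ereal (abstain_rate_iless PX F S (A_const d m \<delta>) fhat) \<le> theta_f PX F fstar R0 * ereal R0)
       \<and> (theta PX F R0 < \<infinity> \<longrightarrow>
            ereal (abstain_rate_iless PX F S (A_const d m \<delta>) fhat) \<le> theta PX F R0 * ereal R0)"
proof -
  let ?a = "A_const d m \<delta> / real m"
  have "0 \<le> ?a"
    using event_E_ratio_nonneg[OF assms(14,12)] assms(7) by simp
  moreover have "0 \<le> sqrt (?a * risk P fstar)"
    using \<open>0 \<le> ?a\<close> risk_nonneg by (intro real_sqrt_ge_zero mult_nonneg_nonneg)
  ultimately have "2 * risk P fstar + 10 * ?a + 4 * sqrt (?a * risk P fstar) \<le> R0" and "0 \<le> R0"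
    unfolding R0_def using risk_nonneg[of P fstar] by linarith+
  then have "iless_G F S (A_const d m \<delta>) fhat \<subseteq> dis_ball PX F fstar R0"
    unfolding PX_def using assms(1-3,14,11,12,7) by (intro iless_G_subset_dis_ball) auto
  then have "abstain_rate_iless PX F S (A_const d m \<delta>) fhat \<le> DeltaB PX F fstar R0"
    unfolding abstain_rate_iless_def DeltaB_def by (rule outer_prob_DIS_mono)
  then have bound_theta_f:
    "ereal (abstain_rate_iless PX F S (A_const d m \<delta>) fhat) \<le> theta_f PX F fstar R0 * ereal R0"
    if "theta_f PX F fstar R0 < \<infinity>"
    using order_trans[OF _ DeltaB_le_theta_f[OF that \<open>0 \<le> R0\<close>]] by simp
  have theta_f_le: "theta_f PX F fstar R0 \<le> theta PX F R0"
    using assms(12) by (rule theta_f_le_theta)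
  then have "theta_f PX F fstar R0 * ereal R0 \<le> theta PX F R0 * ereal R0"
    using \<open>0 \<le> R0\<close> by (intro ereal_mult_right_mono) auto
  with bound_theta_f theta_f_le show ?thesis
    using le_less_trans order_trans by blast
qed

end
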